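(* For all $\theta,\theta_0>0$ and every probability distribution $F$ on $(0,\infty)$, \[ \| p_{\theta,F}-p_{\theta_0,F}\|_1 \le \frac{2|\theta-\theta_0|}{\theta_0}. \]
   Context: For $\theta>0$ and a finite measure $F$ on $(0,\infty)$, the exponential frailty density on $(0,\infty)^2$ is $p_{\theta,F}(x,y)=\int z^2\theta e^{-z(x+\theta y)}\,dF(z)$ (the density of $(X,Y)$ when, given $Z\sim F$, $X$ and $Y$ are independent exponentials with rates $Z$ and $\theta Z$). $\|\cdot\|_1$ denotes the $L^1$ norm with respect to Lebesgue measure on $(0,\infty)^2$. *)

theory Defs
  imports "HOL-Probability.Probability"
begin

definition frailty_density :: "real \<Rightarrow> real measure \<Rightarrow> real \<Rightarrow> real \<Rightarrow> real" where
  "frailty_density \<theta> F x y = (\<integral>z. z\<^sup>2 * \<theta> * exp (- z * (x + \<theta> * y)) \<partial>F)"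

definition L1_dist_quadrant :: "(real \<Rightarrow> real \<Rightarrow> real) \<Rightarrow> (real \<Rightarrow> real \<Rightarrow> real) \<Rightarrow> ennreal" where
  "L1_dist_quadrant f g =
     (\<integral>\<^sup>+ xy. indicator ({0<..} \<times> {0<..}) xy * ennreal \<bar>f (fst xy) (snd xy) - g (fst xy) (snd xy)\<bar>
        \<partial>(lborel :: (real \<times> real) measure))"

end

theory Submission
  imports Defs
begin

text \<open>
  Dividing the kernel \<open>z\<^sup>2 \<theta> exp (-z (x + \<theta> y))\<close> by \<open>\<theta>\<close> leaves a function that is
  decreasing in \<open>\<theta>\<close> on the quadrant, so with \<open>c = \<theta> / \<theta>\<^sub>0\<close> the difference
  \<open>p\<^sub>\<theta> - c p\<^sub>\<theta>\<^sub>0\<close> has constant sign there. Both densities have mass one, hence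
  \<open>\<parallel>p\<^sub>\<theta> - c p\<^sub>\<theta>\<^sub>0\<parallel>\<^sub>1 = \<bar>1 - c\<bar>\<close>, and the triangle inequality gives
  \<open>\<parallel>p\<^sub>\<theta> - p\<^sub>\<theta>\<^sub>0\<parallel>\<^sub>1 \<le> \<bar>1 - c\<bar> + \<bar>1 - c\<bar> = 2 \<bar>\<theta> - \<theta>\<^sub>0\<bar> / \<theta>\<^sub>0\<close>.
\<close>

lemma integral_abs_eq_abs_integral:
  fixes f :: "'a \<Rightarrow> real"
  assumes sign: "(\<forall>x\<in>space M. 0 \<le> f x) \<or> (\<forall>x\<in>space M. f x \<le> 0)"
  shows "(\<integral>x. \<bar>f x\<bar> \<partial>M) = \<bar>\<integral>x. f x \<partial>M\<bar>"
  using sign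
proof
  assume "\<forall>x\<in>space M. 0 \<le> f x"
  then show ?thesis
    by (simp add: Bochner_Integration.integral_cong[of M M "\<lambda>x. \<bar>f x\<bar>" f])
next
  assume "\<forall>x\<in>space M. f x \<le> 0"
  then have "(\<integral>x. \<bar>f x\<bar> \<partial>M) = - (\<integral>x. f x \<partial>M)" and "0 \<le> - (\<integral>x. f x \<partial>M)"
    by (simp_all add: Bochner_Integration.integral_cong[of M M "\<lambda>x. \<bar>f x\<bar>" "\<lambda>x. - f x"]
        flip: integral_minus)
  then show ?thesis
    by simp
qed

lemma integral_abs_diff_le_of_comparable:
  fixes p q :: "'a \<Rightarrow> real"
  assumes p: "integrable M p" "(\<integral>x. p x \<partial>M) = 1"
    and q: "integrable M q" "(\<integral>x. q x \<partial>M) = 1"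
    and q_nonneg: "\<And>x. x \<in> space M \<Longrightarrow> 0 \<le> q x"
    and comparable: "(\<forall>x\<in>space M. p x \<le> c * q x) \<or> (\<forall>x\<in>space M. c * q x \<le> p x)"
  shows "(\<integral>x. \<bar>p x - q x\<bar> \<partial>M) \<le> 2 * \<bar>1 - c\<bar>"
proof -
  have "(\<integral>x. \<bar>p x - q x\<bar> \<partial>M) \<le> (\<integral>x. \<bar>p x - c * q x\<bar> + \<bar>c - 1\<bar> * q x \<partial>M)"
  proof (rule integral_mono)
    fix x assume "x \<in> space M"
    then have "\<bar>(c - 1) * q x\<bar> = \<bar>c - 1\<bar> * q x"
      using q_nonneg by (simp add: abs_mult)
    then show "\<bar>p x - q x\<bar> \<le> \<bar>p x - c * q x\<bar> + \<bar>c - 1\<bar> * q x"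
      using abs_triangle_ineq[of "p x - c * q x" "(c - 1) * q x"] by (simp add: algebra_simps)
  qed (use p q in auto)
  also have "\<dots> = (\<integral>x. \<bar>p x - c * q x\<bar> \<partial>M) + \<bar>c - 1\<bar>"
    using p q by simp
  also have "(\<integral>x. \<bar>p x - c * q x\<bar> \<partial>M) = \<bar>\<integral>x. p x - c * q x \<partial>M\<bar>"
    using comparable by (intro integral_abs_eq_abs_integral) auto
  also have "\<dots> = \<bar>1 - c\<bar>"
    using p q by simp
  finally show ?thesis
    by (simp add: abs_minus_commute)
qed

lemma nn_integral_exponential_density_Ioi:
  fixes c :: real
  assumes "c > 0"
  shows "(\<integral>\<^sup>+y. indicator {0<..} y * ennreal (c * exp (- c * y)) \<partial>lborel) = 1"
proof -
  have "(\<integral>\<^sup>+y. indicator {0<..} y * ennreal (c * exp (- c * y)) \<partial>lborel)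
      = (\<integral>\<^sup>+y. ennreal (exponential_density c y * y ^ 0) \<partial>lborel)"
    using AE_lborel_singleton[of 0]
    by (intro nn_integral_cong_AE, eventually_elim)
       (auto simp: exponential_density_def indicator_def mult.commute)
  also have "\<dots> = 1"
    using nn_integral_erlang_ith_moment[of c 0 0] assms by simp
  finally show ?thesis .
qed

lemma nn_integral_quadrant_exponential_product:
  fixes z \<theta> :: real
  assumes z: "z > 0" and \<theta>: "\<theta> > 0"
  shows "(\<integral>\<^sup>+xy. indicator ({0<..} \<times> {0<..}) xy *
      ennreal (z\<^sup>2 * \<theta> * exp (- z * (fst xy + \<theta> * snd xy))) \<partial>(lborel :: (real \<times> real) measure)) = 1"
proof -
  have split: "indicator ({0<..} \<times> {0<..}) (x, y) * ennreal (z\<^sup>2 * \<theta> * exp (- z * (x + \<theta> * y)))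
    = (indicator {0<..} x * ennreal (z * exp (- z * x))) *
      (indicator {0<..} y * ennreal ((z * \<theta>) * exp (- (z * \<theta>) * y)))" for x y :: real
  proof -
    have "z\<^sup>2 * \<theta> * exp (- z * (x + \<theta> * y)) = (z * exp (- z * x)) * ((z * \<theta>) * exp (- (z * \<theta>) * y))"
      by (simp add: power2_eq_square algebra_simps flip: exp_add)
    then show ?thesis
      using z \<theta> by (auto simp: indicator_def ennreal_mult[symmetric])
  qed
  have "(\<integral>\<^sup>+xy. indicator ({0<..} \<times> {0<..}) xy *
      ennreal (z\<^sup>2 * \<theta> * exp (- z * (fst xy + \<theta> * snd xy))) \<partial>(lborel :: (real \<times> real) measure))
    = (\<integral>\<^sup>+x. \<integral>\<^sup>+y. indicator ({0<..} \<times> {0<..}) (x, y) *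
      ennreal (z\<^sup>2 * \<theta> * exp (- z * (x + \<theta> * y))) \<partial>lborel \<partial>lborel)"
    by (subst lborel_prod[symmetric], subst lborel.nn_integral_fst[symmetric]) simp_all
  also have "\<dots> = (\<integral>\<^sup>+x. (indicator {0<..} x * ennreal (z * exp (- z * x))) *
      (\<integral>\<^sup>+y. indicator {0<..} y * ennreal ((z * \<theta>) * exp (- (z * \<theta>) * y)) \<partial>lborel) \<partial>lborel)"
    unfolding split by (subst nn_integral_cmult) auto
  also have "\<dots> = 1"
    using nn_integral_exponential_density_Ioi z \<theta> by simp
  finally show ?thesis .
qed

lemma power2_mult_exp_le:
  fixes z c :: real
  assumes z: "z \<ge> 0" and c: "c > 0"
  shows "z\<^sup>2 * exp (- z * c) \<le> 4 / c\<^sup>2"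
proof -
  have "z * c / 2 \<le> exp (z * c / 2)"
    using exp_ge_add_one_self[of "z * c / 2"] by linarith
  then have "(z * c / 2)\<^sup>2 \<le> (exp (z * c / 2))\<^sup>2"
    using z c by (intro power_mono) auto
  then have "(z * c)\<^sup>2 \<le> 4 * exp (z * c)"
    by (simp add: power_divide power2_eq_square ac_simps flip: exp_add)
  then have "(z * c)\<^sup>2 * exp (- z * c) \<le> 4 * exp (z * c) * exp (- z * c)"
    by (rule mult_right_mono) simp
  also have "\<dots> = 4"
    by (simp flip: exp_add)
  finally have "(z * c)\<^sup>2 * exp (- z * c) / c\<^sup>2 \<le> 4 / c\<^sup>2"
    by (rule divide_right_mono) simp
  then show ?thesis
    using c by (simp add: power_mult_distrib)
qed

lemma integrable_power2_mult_exp: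
  fixes F :: "real measure" and c :: real
  assumes "finite_measure F" and sets_F: "sets F = sets borel"
    and pos: "AE z in F. 0 < z" and c: "c > 0"
  shows "integrable F (\<lambda>z. z\<^sup>2 * exp (- z * c))"
proof -
  interpret finite_measure F by fact
  show ?thesis
  proof (rule integrable_const_bound[where B = "4 / c\<^sup>2"])
    show "AE z in F. norm (z\<^sup>2 * exp (- z * c)) \<le> 4 / c\<^sup>2"
      using pos by eventually_elim (use power2_mult_exp_le[of _ c] c in simp)
    show "(\<lambda>z. z\<^sup>2 * exp (- z * c)) \<in> borel_measurable F"
      unfolding measurable_cong_sets[OF sets_F refl] by measurable
  qed
qed

lemma integral_power2_mult_exp_antimono:
  fixes F :: "real measure" and c c' :: real
  assumes "finite_measure F" and "sets F = sets borel"
    and pos: "AE z in F. 0 < z" and "0 < c" and "c \<le> c'"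
  shows "(\<integral>z. z\<^sup>2 * exp (- z * c') \<partial>F) \<le> (\<integral>z. z\<^sup>2 * exp (- z * c) \<partial>F)"
  using assms integrable_power2_mult_exp[OF assms(1-3)]
  by (intro integral_mono_AE) (auto elim!: eventually_mono intro!: mult_left_mono)

lemma frailty_density_eq:
  "frailty_density \<theta> F x y = \<theta> * (\<integral>z. z\<^sup>2 * exp (- z * (x + \<theta> * y)) \<partial>F)"
  unfolding frailty_density_def by (simp add: ac_simps flip: integral_mult_right_zero)

lemma frailty_density_nonneg: "\<theta> \<ge> 0 \<Longrightarrow> 0 \<le> frailty_density \<theta> F x y"
  unfolding frailty_density_def by (intro Bochner_Integration.integral_nonneg) simp

lemma frailty_density_scaled_comparison:
  fixes F :: "real measure"
  assumes "finite_measure F" and "sets F = sets borel" and "AE z in F. 0 < z"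
    and \<theta>: "\<theta> > 0" and \<theta>\<^sub>0: "\<theta>\<^sub>0 > 0" and x: "x \<ge> 0" and y: "y > 0"
  shows "\<theta>\<^sub>0 \<le> \<theta> \<Longrightarrow> frailty_density \<theta> F x y \<le> \<theta> / \<theta>\<^sub>0 * frailty_density \<theta>\<^sub>0 F x y"
    and "\<theta> \<le> \<theta>\<^sub>0 \<Longrightarrow> \<theta> / \<theta>\<^sub>0 * frailty_density \<theta>\<^sub>0 F x y \<le> frailty_density \<theta> F x y"
proof -
  define L where "L c = (\<integral>z. z\<^sup>2 * exp (- z * c) \<partial>F)" for c
  have density: "frailty_density t F x y = t * L (x + t * y)" for t
    unfolding L_def frailty_density_eq ..
  have "0 < x + t * y" if "t > 0" for t
    using x y that by (simp add: add_nonneg_pos)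
  then have "L (x + t' * y) \<le> L (x + t * y)" if "0 < t" "t \<le> t'" for t t'
    unfolding L_def using that y
    by (intro integral_power2_mult_exp_antimono[OF assms(1-3)]) (auto intro: mult_right_mono)
  then show "\<theta>\<^sub>0 \<le> \<theta> \<Longrightarrow> frailty_density \<theta> F x y \<le> \<theta> / \<theta>\<^sub>0 * frailty_density \<theta>\<^sub>0 F x y"
    and "\<theta> \<le> \<theta>\<^sub>0 \<Longrightarrow> \<theta> / \<theta>\<^sub>0 * frailty_density \<theta>\<^sub>0 F x y \<le> frailty_density \<theta> F x y"
    using \<theta> \<theta>\<^sub>0 by (auto simp: density intro: mult_left_mono)
qed

lemma sets_lborel_pair_measure:
  fixes F :: "real measure"
  assumes "sets F = sets borel"
  shows "sets ((lborel :: (real \<times> real) measure) \<Otimes>\<^sub>M F) = sets ((borel \<Otimes>\<^sub>M borel) \<Otimes>\<^sub>M borel)"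
  using assms by (intro sets_pair_measure_cong) (simp_all only: borel_prod sets_lborel)

lemma borel_measurable_frailty_density:
  fixes F :: "real measure"
  assumes "sigma_finite_measure F" and sets_F: "sets F = sets borel"
  shows "(\<lambda>xy. frailty_density \<theta> F (fst xy) (snd xy)) \<in> borel_measurable (lborel :: (real \<times> real) measure)"
proof -
  interpret sigma_finite_measure F by fact
  have "(\<lambda>(xy, z). z\<^sup>2 * \<theta> * exp (- z * (fst xy + \<theta> * snd xy)))
      \<in> borel_measurable ((lborel :: (real \<times> real) measure) \<Otimes>\<^sub>M F)"
    unfolding measurable_cong_sets[OF sets_lborel_pair_measure[OF sets_F] refl] by measurable
  then show ?thesis
    unfolding frailty_density_def by (rule borel_measurable_lebesgue_integral)
qed

lemma nn_integral_quadrant_frailty_density: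
  fixes F :: "real measure"
  assumes "prob_space F" and sets_F: "sets F = sets borel" and pos: "AE z in F. 0 < z"
    and \<theta>: "\<theta> > 0"
  shows "(\<integral>\<^sup>+xy. indicator ({0<..} \<times> {0<..}) xy * ennreal (frailty_density \<theta> F (fst xy) (snd xy))
      \<partial>(lborel :: (real \<times> real) measure)) = 1"
proof -
  interpret prob_space F by fact
  interpret pair_sigma_finite "lborel :: (real \<times> real) measure" F ..
  let ?Q = "{0<..} \<times> {0<..} :: (real \<times> real) set"
  let ?k = "\<lambda>xy z. z\<^sup>2 * \<theta> * exp (- z * (fst xy + \<theta> * snd xy))"
  have "indicator ?Q xy * ennreal (frailty_density \<theta> F (fst xy) (snd xy))
      = (\<integral>\<^sup>+z. indicator ?Q xy * ennreal (?k xy z) \<partial>F)" for xy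
  proof (cases "xy \<in> ?Q")
    case True
    then have "integrable F (\<lambda>z. \<theta> * (z\<^sup>2 * exp (- z * (fst xy + \<theta> * snd xy))))"
      using \<theta> by (intro integrable_mult_right integrable_power2_mult_exp[OF _ sets_F pos])
        (auto intro: add_pos_pos)
    then have "ennreal (frailty_density \<theta> F (fst xy) (snd xy)) = (\<integral>\<^sup>+z. ennreal (?k xy z) \<partial>F)"
      unfolding frailty_density_def using \<theta>
      by (intro nn_integral_eq_integral[symmetric]) (auto simp: ac_simps)
    with True show ?thesis
      by simp
  qed simp
  then have "(\<integral>\<^sup>+xy. indicator ?Q xy * ennreal (frailty_density \<theta> F (fst xy) (snd xy)) \<partial>lborel)
      = (\<integral>\<^sup>+xy. \<integral>\<^sup>+z. indicator ?Q xy * ennreal (?k xy z) \<partial>F \<partial>lborel)"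
    by simp
  also have "\<dots> = (\<integral>\<^sup>+z. \<integral>\<^sup>+xy. indicator ?Q xy * ennreal (?k xy z) \<partial>lborel \<partial>F)"
    by (rule Fubini'[symmetric])
      (unfold measurable_cong_sets[OF sets_lborel_pair_measure[OF sets_F] refl], measurable)
  also have "\<dots> = (\<integral>\<^sup>+z. 1 \<partial>F)"
    using pos by (intro nn_integral_cong_AE, eventually_elim)
      (use nn_integral_quadrant_exponential_product \<theta> in auto)
  also have "\<dots> = 1"
    by (simp add: emeasure_space_1)
  finally show ?thesis .
qed

lemma has_bochner_integral_quadrant_frailty_density:
  fixes F :: "real measure"
  assumes "prob_space F" and sets_F: "sets F = sets borel" and pos: "AE z in F. 0 < z"
    and \<theta>: "\<theta> > 0"
  shows "has_bochner_integral lborel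
      (\<lambda>xy :: real \<times> real. indicator ({0<..} \<times> {0<..}) xy * frailty_density \<theta> F (fst xy) (snd xy)) 1"
proof -
  have "(\<integral>\<^sup>+xy. ennreal (indicator ({0<..} \<times> {0<..}) xy * frailty_density \<theta> F (fst xy) (snd xy))
      \<partial>(lborel :: (real \<times> real) measure)) = ennreal 1"
    unfolding nn_integral_quadrant_frailty_density[OF assms, symmetric] ennreal_1
    by (intro nn_integral_cong) (simp add: indicator_def)
  moreover have "(\<lambda>xy. indicator ({0<..} \<times> {0<..}) xy * frailty_density \<theta> F (fst xy) (snd xy))
      \<in> borel_measurable (lborel :: (real \<times> real) measure)"
    by (intro borel_measurable_times borel_measurable_indicator
        borel_measurable_frailty_density[OF prob_space_imp_sigma_finite sets_F])
      (simp_all add: assms(1) borel_open open_Times)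
  ultimately show ?thesis
    unfolding has_bochner_integral_iff using frailty_density_nonneg \<theta>
    by (subst (asm) nn_integral_eq_integrable) auto
qed

theorem mainTheorem2:
  fixes \<theta> \<theta>\<^sub>0 :: real and F :: "real measure"
  assumes "\<theta> > 0" and "\<theta>\<^sub>0 > 0"
    and "prob_space F" and "sets F = sets borel"
    and "emeasure F {..0} = 0"
  shows "L1_dist_quadrant (frailty_density \<theta> F) (frailty_density \<theta>\<^sub>0 F)
           \<le> ennreal (2 * \<bar>\<theta> - \<theta>\<^sub>0\<bar> / \<theta>\<^sub>0)"
proof -
  have pos: "AE z in F. 0 < z"
    by (rule AE_I[of _ _ "{..0}"]) (auto simp: assms(4,5))
  define p where "p t xy = indicator ({0<..} \<times> {0<..}) xy * frailty_density t F (fst xy) (snd xy)"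
    for t and xy :: "real \<times> real"
  have p_integrable: "integrable lborel (p t)" and p_integral: "(\<integral>xy. p t xy \<partial>lborel) = 1"
    if "t > 0" for t
    using has_bochner_integral_quadrant_frailty_density[OF assms(3,4) pos that]
    unfolding p_def has_bochner_integral_iff by auto
  have "L1_dist_quadrant (frailty_density \<theta> F) (frailty_density \<theta>\<^sub>0 F)
      = (\<integral>\<^sup>+xy. ennreal \<bar>p \<theta> xy - p \<theta>\<^sub>0 xy\<bar> \<partial>lborel)"
    unfolding L1_dist_quadrant_def p_def by (intro nn_integral_cong) (simp add: indicator_def)
  also have "\<dots> = ennreal (\<integral>xy. \<bar>p \<theta> xy - p \<theta>\<^sub>0 xy\<bar> \<partial>lborel)"
    using p_integrable assms(1,2) by (intro nn_integral_eq_integral) auto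
  also have "\<dots> \<le> ennreal (2 * \<bar>1 - \<theta> / \<theta>\<^sub>0\<bar>)"
  proof (intro ennreal_leI integral_abs_diff_le_of_comparable)
    show "0 \<le> p \<theta>\<^sub>0 xy" for xy
      unfolding p_def using frailty_density_nonneg assms(2) by simp
    show "(\<forall>xy\<in>space lborel. p \<theta> xy \<le> \<theta> / \<theta>\<^sub>0 * p \<theta>\<^sub>0 xy)
        \<or> (\<forall>xy\<in>space lborel. \<theta> / \<theta>\<^sub>0 * p \<theta>\<^sub>0 xy \<le> p \<theta> xy)"
      using frailty_density_scaled_comparison[OF prob_space.finite_measure[OF assms(3)] assms(4) pos assms(1,2)]
      by (cases "\<theta>\<^sub>0 \<le> \<theta>") (auto simp: p_def indicator_def)
  qed (use assms p_integrable p_integral in auto)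
  also have "2 * \<bar>1 - \<theta> / \<theta>\<^sub>0\<bar> = 2 * \<bar>\<theta> - \<theta>\<^sub>0\<bar> / \<theta>\<^sub>0"
    using assms(2) by (simp add: field_simps abs_minus_commute)
  finally show ?thesis .
qed

end
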